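(* Let $K$ be a field, let $\Sigma$ be a rational pointed fan in $\mathbb{R}^d$, let $\mathcal{M}_\Sigma$ be a monoidal complex supported by $\Sigma$, and let $C_1,\dots,C_j,D\in\Sigma$. Then in $K[\mathcal{M}_\Sigma]$: (i) $\mathfrak p_{C_1\cap\dots\cap C_j}=\mathfrak p_{C_1}+\dots+\mathfrak p_{C_j}$; (ii) $\mathfrak p_D+\bigcap_{i=1}^t\mathfrak p_{C_i}=\bigcap_{i=1}^t(\mathfrak p_D+\mathfrak p_{C_i})$ (for any $t\le j$ cones $C_1,\dots,C_t$).
   Context: A rational pointed fan $\Sigma$ in $\mathbb{R}^d$ is a finite collection of rational pointed polyhedral cones closed under taking faces, such that the intersection of two cones of $\Sigma$ is a common face of both. A monoidal complex supported by $\Sigma$ is a set $\mathcal{M}_\Sigma=\{M_C\subseteq\mathbb{Z}^d : C\in\Sigma\}$ of affine monoids such that the cone generated by $M_C$ is $C$ and $M_{C'}=M_C\cap C'$ whenever $C'\subseteq C$ are in $\Sigma$. With $|\mathcal{M}_\Sigma|=\bigcup_C M_C$, the toric face ring $K[\mathcal{M}_\Sigma]$ has $K$-basis $\{x^a: a\in|\mathcal{M}_\Sigma|\}$ with $x^ax^b=x^{a+b}$ if $a,b$ lie in a common $M_C$ and $0$ otherwise. For $C\in\Sigma$, $\mathfrak p_C$ is the ideal generated by the $x^a$ with $a\in|\mathcal{M}_\Sigma|\setminus M_C$. *)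

theory Defs
  imports "HOL-Analysis.Analysis" "HOL-Algebra.Ideal" "HOL-Algebra.AbelCoset"
begin

definition real_vec :: "int ^ 'd \<Rightarrow> real ^ 'd" where
  "real_vec a = (\<chi> i. real_of_int (a $ i))"

definition rational_polyhedral_cone :: "(real ^ 'd) set \<Rightarrow> bool" where
  "rational_polyhedral_cone C \<longleftrightarrow>
     (\<exists>V :: (int ^ 'd) set. finite V \<and> C = convex_cone hull (real_vec ` V))"

definition pointed_cone :: "(real ^ 'd) set \<Rightarrow> bool" where
  "pointed_cone C \<longleftrightarrow> C \<inter> uminus ` C = {0}"

definition rational_pointed_fan :: "(real ^ 'd) set set \<Rightarrow> bool" where
  "rational_pointed_fan \<Sigma> \<longleftrightarrow> finite \<Sigma> \<and>
     (\<forall>C\<in>\<Sigma>. rational_polyhedral_cone C \<and> pointed_cone C) \<and>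
     (\<forall>C\<in>\<Sigma>. \<forall>F. F face_of C \<and> F \<noteq> {} \<longrightarrow> F \<in> \<Sigma>) \<and>
     (\<forall>C\<in>\<Sigma>. \<forall>C'\<in>\<Sigma>. (C \<inter> C') face_of C \<and> (C \<inter> C') face_of C')"

inductive_set monoid_gen :: "(int ^ 'd) set \<Rightarrow> (int ^ 'd) set" for G where
  zero: "0 \<in> monoid_gen G"
| add: "g \<in> G \<Longrightarrow> x \<in> monoid_gen G \<Longrightarrow> g + x \<in> monoid_gen G"

definition affine_monoid :: "(int ^ 'd) set \<Rightarrow> bool" where
  "affine_monoid M \<longleftrightarrow> (\<exists>G. finite G \<and> M = monoid_gen G)"

definition monoidal_complex ::
    "(real ^ 'd) set set \<Rightarrow> ((real ^ 'd) set \<Rightarrow> (int ^ 'd) set) \<Rightarrow> bool" where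
  "monoidal_complex \<Sigma> M \<longleftrightarrow>
     (\<forall>C\<in>\<Sigma>. affine_monoid (M C) \<and> convex_cone hull (real_vec ` M C) = C) \<and>
     (\<forall>C\<in>\<Sigma>. \<forall>C'\<in>\<Sigma>. C' \<subseteq> C \<longrightarrow> M C' = M C \<inter> {a. real_vec a \<in> C'})"

definition mc_support ::
    "(real ^ 'd) set set \<Rightarrow> ((real ^ 'd) set \<Rightarrow> (int ^ 'd) set) \<Rightarrow> (int ^ 'd) set" where
  "mc_support \<Sigma> M = (\<Union>C\<in>\<Sigma>. M C)"

text \<open>Toric face ring K[M]: elements are finitely supported K-valued functions on |M|
  (coefficients w.r.t. the basis x^a), with x^a x^b = x^(a+b) if a, b lie in a common M_C
  and 0 otherwise.\<close>
definition toric_face_ring ::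
    "(real ^ 'd) set set \<Rightarrow> ((real ^ 'd) set \<Rightarrow> (int ^ 'd) set) \<Rightarrow> (int ^ 'd \<Rightarrow> 'k::field) ring" where
  "toric_face_ring \<Sigma> M =
     \<lparr>carrier = {f. finite {a. f a \<noteq> 0} \<and> {a. f a \<noteq> 0} \<subseteq> mc_support \<Sigma> M},
      mult = (\<lambda>f g c. \<Sum>p\<in>{(a, b). f a \<noteq> 0 \<and> g b \<noteq> 0 \<and> a + b = c \<and>
                                     (\<exists>C\<in>\<Sigma>. a \<in> M C \<and> b \<in> M C)}. f (fst p) * g (snd p)),
      one = (\<lambda>c. if c = 0 then 1 else 0),
      zero = (\<lambda>c. 0),
      add = (\<lambda>f g c. f c + g c)\<rparr>"

definition monomial :: "int ^ 'd \<Rightarrow> (int ^ 'd \<Rightarrow> 'k::field)" where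
  "monomial a = (\<lambda>c. if c = a then 1 else 0)"

definition tfr_prime ::
    "(real ^ 'd) set set \<Rightarrow> ((real ^ 'd) set \<Rightarrow> (int ^ 'd) set) \<Rightarrow> (real ^ 'd) set
       \<Rightarrow> (int ^ 'd \<Rightarrow> 'k::field) set" where
  "tfr_prime \<Sigma> M C = genideal (toric_face_ring \<Sigma> M)
      {monomial a | a. a \<in> mc_support \<Sigma> M - M C}"

fun ideal_sum :: "('a, 'b) ring_scheme \<Rightarrow> (nat \<Rightarrow> 'a set) \<Rightarrow> nat \<Rightarrow> 'a set" where
  "ideal_sum R I 0 = {\<zero>\<^bsub>R\<^esub>}"
| "ideal_sum R I (Suc 0) = I 1"
| "ideal_sum R I (Suc (Suc n)) = ideal_sum R I (Suc n) <+>\<^bsub>R\<^esub> I (Suc (Suc n))"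

end

theory Submission
  imports Defs
begin

text \<open>
  The ideal \<open>p_C\<close> is the \<open>K\<close>-span of the monomials \<open>x^a\<close> with \<open>a \<notin> M_C\<close>, i.e. the set of
  elements of \<open>K[M]\<close> whose support avoids \<open>M_C\<close>. This span is already an ideal: if \<open>x^p x^q\<close> is
  nonzero then \<open>p, q\<close> lie in a common \<open>M_C'\<close>, and since \<open>C \<inter> C'\<close> is a face of \<open>C'\<close>,
  \<open>p + q \<in> M_C\<close> forces \<open>q \<in> M_C\<close>. For spans of this shape, sums and intersections are computed
  on the excluded sets: avoiding \<open>S\<close> plus avoiding \<open>T\<close> is avoiding \<open>S \<inter> T\<close>, and intersections
  correspond to unions. So (i) reduces to \<open>M_(C_1 \<inter> ... \<inter> C_j) = M_C_1 \<inter> ... \<inter> M_C_j\<close>,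
  and (ii) to the distributive law \<open>M_D \<inter> \<Union>\<^sub>i M_C_i = \<Union>\<^sub>i (M_D \<inter> M_C_i)\<close>.
\<close>

lemma face_of_conic_summands:
  assumes "F face_of S" "conic F" "x \<in> S" "y \<in> S" "x + y \<in> F"
  shows "x \<in> F \<and> y \<in> F"
proof (cases "x = y")
  case True
  then show ?thesis
    using conicD[OF assms(2,5), of "1/2"] by (simp add: scaleR_2[symmetric])
next
  case False
  have "midpoint x y \<in> F"
    using conicD[OF assms(2,5), of "1/2"] by (simp add: midpoint_def)
  moreover have "midpoint x y \<in> open_segment x y"
    using False by simp
  ultimately show ?thesis
    using assms(1,3,4) unfolding face_of_def by blast
qed

lemma sum_rotate3:
  "(\<Sum>x\<in>X. \<Sum>y\<in>Y. \<Sum>z\<in>Z. F x y z) = (\<Sum>y\<in>Y. \<Sum>z\<in>Z. \<Sum>x\<in>X. F x y z)"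
  by (subst sum.swap) (rule sum.cong[OF refl], rule sum.swap)

lemma monoid_gen_add_closed:
  "x \<in> monoid_gen G \<Longrightarrow> y \<in> monoid_gen G \<Longrightarrow> x + y \<in> monoid_gen G"
  by (induction x rule: monoid_gen.induct) (auto simp: add.assoc intro: monoid_gen.add)

lemma real_vec_0: "real_vec 0 = 0"
  by (simp add: real_vec_def vec_eq_iff)

lemma real_vec_add: "real_vec (a + b) = real_vec a + real_vec b"
  by (simp add: real_vec_def vec_eq_iff)

lemma ideal_sum_cong:
  "(\<And>i. i \<in> {1..n} \<Longrightarrow> I i = J i) \<Longrightarrow> ideal_sum R I n = ideal_sum R J n"
  by (induction R I n rule: ideal_sum.induct) auto

lemma ideal_sum_Suc: "1 \<le> n \<Longrightarrow> ideal_sum R I (Suc n) = ideal_sum R I n <+>\<^bsub>R\<^esub> I (Suc n)"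
  by (cases n) auto

text \<open>\<open>\<Sigma> \<noteq> {}\<close> is needed only for \<open>\<one> = x^0\<close> to lie in the carrier.\<close>
locale fan_monoidal_complex =
  fixes \<Sigma> :: "(real ^ 'd) set set" and M :: "(real ^ 'd) set \<Rightarrow> (int ^ 'd) set"
  assumes fan: "rational_pointed_fan \<Sigma>" and complex: "monoidal_complex \<Sigma> M"
    and nonempty: "\<Sigma> \<noteq> {}"
begin

lemma monoid_add_closed: "C \<in> \<Sigma> \<Longrightarrow> a \<in> M C \<Longrightarrow> b \<in> M C \<Longrightarrow> a + b \<in> M C"
  using complex unfolding monoidal_complex_def affine_monoid_def by (metis monoid_gen_add_closed)

lemma monoid_zero: "C \<in> \<Sigma> \<Longrightarrow> 0 \<in> M C"
  using complex unfolding monoidal_complex_def affine_monoid_def by (metis monoid_gen.zero)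

lemma real_vec_in_cone: "C \<in> \<Sigma> \<Longrightarrow> a \<in> M C \<Longrightarrow> real_vec a \<in> C"
  using complex unfolding monoidal_complex_def by (metis hull_subset image_subset_iff)

lemma conic_cone: "C \<in> \<Sigma> \<Longrightarrow> conic C"
  using complex unfolding monoidal_complex_def
  by (metis convex_cone_convex_cone_hull convex_cone_def)

lemma monoid_restrict: "C \<in> \<Sigma> \<Longrightarrow> C' \<in> \<Sigma> \<Longrightarrow> C' \<subseteq> C \<Longrightarrow> M C' = M C \<inter> {a. real_vec a \<in> C'}"
  using complex unfolding monoidal_complex_def by blast

lemma cone_Int_in_fan:
  assumes "C \<in> \<Sigma>" "C' \<in> \<Sigma>"
  shows "C \<inter> C' \<in> \<Sigma>"
proof -
  have "0 \<in> K" if "K \<in> \<Sigma>" for K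
    using real_vec_in_cone[OF that monoid_zero[OF that]] by (simp add: real_vec_0)
  then have "0 \<in> C \<inter> C'"
    using assms by blast
  then show ?thesis
    using fan assms unfolding rational_pointed_fan_def by blast
qed

lemma monoid_Int: "C \<in> \<Sigma> \<Longrightarrow> C' \<in> \<Sigma> \<Longrightarrow> M (C \<inter> C') = M C \<inter> M C'"
  using monoid_restrict[of C "C \<inter> C'"] monoid_restrict[of C' "C \<inter> C'"]
    cone_Int_in_fan real_vec_in_cone by blast

lemma monoid_INT:
  assumes "finite I" "I \<noteq> {}" "C ` I \<subseteq> \<Sigma>"
  shows "(\<Inter>i\<in>I. C i) \<in> \<Sigma> \<and> M (\<Inter>i\<in>I. C i) = (\<Inter>i\<in>I. M (C i))"
  using assms by (induction I rule: finite_ne_induct) (auto simp: cone_Int_in_fan monoid_Int)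

text \<open>A conic face contains both summands of any of its points, and \<open>C \<inter> C'\<close> is a face of \<open>C'\<close>.\<close>
lemma monoid_summands:
  assumes "C \<in> \<Sigma>" "C' \<in> \<Sigma>" "p \<in> M C'" "q \<in> M C'" "p + q \<in> M C"
  shows "p \<in> M C \<and> q \<in> M C"
proof -
  have F: "C \<inter> C' \<in> \<Sigma>"
    using assms cone_Int_in_fan by blast
  have "C \<inter> C' face_of C'"
    using fan assms unfolding rational_pointed_fan_def by blast
  moreover have "real_vec p + real_vec q \<in> C \<inter> C'"
    using assms real_vec_in_cone monoid_add_closed by (metis IntI real_vec_add)
  ultimately have "real_vec p \<in> C \<inter> C' \<and> real_vec q \<in> C \<inter> C'"
    using face_of_conic_summands conic_cone[OF F] real_vec_in_cone assms by blast
  then have "p \<in> M (C \<inter> C') \<and> q \<in> M (C \<inter> C')"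
    using monoid_restrict[OF assms(2) F] assms by blast
  then show ?thesis
    using monoid_Int assms by blast
qed

definition compatible :: "int ^ 'd \<Rightarrow> int ^ 'd \<Rightarrow> bool" where
  "compatible a b \<longleftrightarrow> (\<exists>C\<in>\<Sigma>. a \<in> M C \<and> b \<in> M C)"

definition compatible3 :: "int ^ 'd \<Rightarrow> int ^ 'd \<Rightarrow> int ^ 'd \<Rightarrow> bool" where
  "compatible3 a b e \<longleftrightarrow> (\<exists>C\<in>\<Sigma>. a \<in> M C \<and> b \<in> M C \<and> e \<in> M C)"

lemma compatible_commute: "compatible a b \<longleftrightarrow> compatible b a"
  unfolding compatible_def by blast

lemma compatible3_commute: "compatible3 a b e \<longleftrightarrow> compatible3 e b a"
  unfolding compatible3_def by blast

lemma compatible_sum_iff_compatible3: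
  "compatible a b \<and> compatible (a + b) e \<longleftrightarrow> compatible3 a b e"
proof
  assume "compatible a b \<and> compatible (a + b) e"
  then obtain C C' where "C \<in> \<Sigma>" "a \<in> M C'" "b \<in> M C'" "C' \<in> \<Sigma>" "a + b \<in> M C" "e \<in> M C"
    unfolding compatible_def by blast
  then show "compatible3 a b e"
    using monoid_summands[of C C' a b] unfolding compatible3_def by blast
next
  assume "compatible3 a b e"
  then show "compatible a b \<and> compatible (a + b) e"
    unfolding compatible3_def compatible_def using monoid_add_closed by blast
qed

abbreviation R where "R \<equiv> toric_face_ring \<Sigma> M"

lemma carrier_R: "f \<in> carrier R \<longleftrightarrow> finite {a. f a \<noteq> 0} \<and> {a. f a \<noteq> 0} \<subseteq> mc_support \<Sigma> M"
  by (simp add: toric_face_ring_def)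

lemma add_R: "f \<oplus>\<^bsub>R\<^esub> g = (\<lambda>c. f c + g c)"
  by (simp add: toric_face_ring_def)

lemma zero_R: "\<zero>\<^bsub>R\<^esub> = (\<lambda>c. 0)"
  by (simp add: toric_face_ring_def)

lemma one_R: "\<one>\<^bsub>R\<^esub> = (\<lambda>c. if c = 0 then 1 else 0)"
  by (simp add: toric_face_ring_def)

lemma mult_R:
  "f \<otimes>\<^bsub>R\<^esub> g = (\<lambda>c. \<Sum>p\<in>{(a, b). f a \<noteq> 0 \<and> g b \<noteq> 0 \<and> a + b = c \<and> compatible a b}.
     f (fst p) * g (snd p))"
  by (simp add: toric_face_ring_def compatible_def)

definition convolution_on ::
    "(int ^ 'd) set \<Rightarrow> (int ^ 'd) set \<Rightarrow> (int ^ 'd \<Rightarrow> 'k::field) \<Rightarrow> (int ^ 'd \<Rightarrow> 'k) \<Rightarrow> int ^ 'd \<Rightarrow> 'k"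
  where "convolution_on A B f g c =
    (\<Sum>a\<in>A. \<Sum>b\<in>B. if a + b = c \<and> compatible a b then f a * g b else 0)"

lemma mult_eq_convolution_on:
  assumes "finite A" "finite B" "{a. f a \<noteq> 0} \<subseteq> A" "{b. g b \<noteq> 0} \<subseteq> B"
  shows "(f \<otimes>\<^bsub>R\<^esub> g) c = convolution_on A B f g c"
proof -
  have "convolution_on A B f g c = (\<Sum>p\<in>A \<times> B.
      if fst p + snd p = c \<and> compatible (fst p) (snd p) then f (fst p) * g (snd p) else 0)"
    unfolding convolution_on_def by (simp add: sum.cartesian_product case_prod_beta)
  also have "\<dots> = (\<Sum>p\<in>{(a, b). f a \<noteq> 0 \<and> g b \<noteq> 0 \<and> a + b = c \<and> compatible a b}.
      f (fst p) * g (snd p))"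
    by (rule sum.mono_neutral_cong_right) (use assms in auto)
  finally show ?thesis
    by (simp add: mult_R)
qed

lemma mult_nonzeroD:
  assumes "(f \<otimes>\<^bsub>R\<^esub> g) c \<noteq> 0"
  obtains a b where "f a \<noteq> 0" "g b \<noteq> 0" "a + b = c" "compatible a b"
proof (rule ccontr)
  assume "\<not> thesis"
  then have "{(a, b). f a \<noteq> 0 \<and> g b \<noteq> 0 \<and> a + b = c \<and> compatible a b} = {}"
    using that by blast
  with assms show False
    by (simp add: mult_R)
qed

lemma support_mult_subset:
  "{c. (f \<otimes>\<^bsub>R\<^esub> g) c \<noteq> 0} \<subseteq> (\<lambda>(a, b). a + b) ` ({a. f a \<noteq> 0} \<times> {b. g b \<noteq> 0})"
  by (force elim: mult_nonzeroD)

lemma mult_closed: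
  assumes "f \<in> carrier R" "g \<in> carrier R"
  shows "f \<otimes>\<^bsub>R\<^esub> g \<in> carrier R"
proof -
  have "finite {c. (f \<otimes>\<^bsub>R\<^esub> g) c \<noteq> 0}"
    using assms by (auto simp: carrier_R intro: finite_subset[OF support_mult_subset])
  moreover have "{c. (f \<otimes>\<^bsub>R\<^esub> g) c \<noteq> 0} \<subseteq> mc_support \<Sigma> M"
  proof
    fix c
    assume "c \<in> {c. (f \<otimes>\<^bsub>R\<^esub> g) c \<noteq> 0}"
    then obtain a b where "a + b = c" "compatible a b"
      by (auto elim: mult_nonzeroD)
    then show "c \<in> mc_support \<Sigma> M"
      unfolding compatible_def mc_support_def using monoid_add_closed by blast
  qed
  ultimately show ?thesis
    by (simp add: carrier_R)
qed

lemma mult_commute: "f \<otimes>\<^bsub>R\<^esub> g = g \<otimes>\<^bsub>R\<^esub> f"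
  unfolding mult_R
  by (intro ext sum.reindex_bij_witness[of _ prod.swap prod.swap])
    (auto simp: compatible_commute add.commute)

lemma mult_mult_eq_sum3:
  assumes "f \<in> carrier R" "g \<in> carrier R" "h \<in> carrier R"
  shows "((f \<otimes>\<^bsub>R\<^esub> g) \<otimes>\<^bsub>R\<^esub> h) d =
    (\<Sum>e\<in>{e. h e \<noteq> 0}. \<Sum>a\<in>{a. f a \<noteq> 0}. \<Sum>b\<in>{b. g b \<noteq> 0}.
       if a + b + e = d \<and> compatible3 a b e then f a * g b * h e else 0)"
proof -
  define A B E where "A = {a. f a \<noteq> 0}" and "B = {b. g b \<noteq> 0}" and "E = {e. h e \<noteq> 0}"
  define U where "U = (\<lambda>(a, b). a + b) ` (A \<times> B)"
  have fin: "finite A" "finite B" "finite E" "finite U"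
    using assms by (auto simp: carrier_R A_def B_def E_def U_def)
  have fg: "(f \<otimes>\<^bsub>R\<^esub> g) u = convolution_on A B f g u" for u
    using fin by (intro mult_eq_convolution_on) (auto simp: A_def B_def)
  have "((f \<otimes>\<^bsub>R\<^esub> g) \<otimes>\<^bsub>R\<^esub> h) d = convolution_on U E (f \<otimes>\<^bsub>R\<^esub> g) h d"
    using fin support_mult_subset[of f g] by (intro mult_eq_convolution_on) (auto simp: A_def B_def E_def U_def)
  also have "\<dots> = (\<Sum>e\<in>E. \<Sum>u\<in>U. \<Sum>a\<in>A. \<Sum>b\<in>B.
      if u + e = d \<and> compatible u e \<and> a + b = u \<and> compatible a b then f a * g b * h e else 0)"
    unfolding convolution_on_def fg
    by (subst sum.swap) (auto simp: sum_distrib_right intro!: sum.cong)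
  also have "\<dots> = (\<Sum>e\<in>E. \<Sum>a\<in>A. \<Sum>b\<in>B. \<Sum>u\<in>U.
      if u + e = d \<and> compatible u e \<and> a + b = u \<and> compatible a b then f a * g b * h e else 0)"
    by (intro sum.cong refl sum_rotate3)
  also have "\<dots> = (\<Sum>e\<in>E. \<Sum>a\<in>A. \<Sum>b\<in>B.
      if a + b + e = d \<and> compatible3 a b e then f a * g b * h e else 0)"
  proof (intro sum.cong refl)
    fix e a b
    assume "a \<in> A" "b \<in> B"
    then have "a + b \<in> U"
      by (force simp: U_def)
    have "(\<Sum>u\<in>U. if u + e = d \<and> compatible u e \<and> a + b = u \<and> compatible a b
        then f a * g b * h e else 0) = (\<Sum>u\<in>U. if u = a + b
        then (if a + b + e = d \<and> compatible3 a b e then f a * g b * h e else 0) else 0)"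
      by (intro sum.cong refl) (auto simp: compatible_sum_iff_compatible3[symmetric])
    also have "\<dots> = (if a + b + e = d \<and> compatible3 a b e then f a * g b * h e else 0)"
      using \<open>a + b \<in> U\<close> fin by simp
    finally show "(\<Sum>u\<in>U. if u + e = d \<and> compatible u e \<and> a + b = u \<and> compatible a b
        then f a * g b * h e else 0) = (if a + b + e = d \<and> compatible3 a b e then f a * g b * h e else 0)" .
  qed
  finally show ?thesis
    by (simp only: A_def B_def E_def)
qed

lemma mult_assoc:
  assumes "f \<in> carrier R" "g \<in> carrier R" "h \<in> carrier R"
  shows "(f \<otimes>\<^bsub>R\<^esub> g) \<otimes>\<^bsub>R\<^esub> h = f \<otimes>\<^bsub>R\<^esub> (g \<otimes>\<^bsub>R\<^esub> h)"
proof
  fix d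
  have "(f \<otimes>\<^bsub>R\<^esub> (g \<otimes>\<^bsub>R\<^esub> h)) d = ((h \<otimes>\<^bsub>R\<^esub> g) \<otimes>\<^bsub>R\<^esub> f) d"
    by (simp only: mult_commute)
  also have "\<dots> = (\<Sum>a\<in>{a. f a \<noteq> 0}. \<Sum>e\<in>{e. h e \<noteq> 0}. \<Sum>b\<in>{b. g b \<noteq> 0}.
      if e + b + a = d \<and> compatible3 e b a then h e * g b * f a else 0)"
    by (rule mult_mult_eq_sum3[OF assms(3,2,1)])
  also have "\<dots> = (\<Sum>e\<in>{e. h e \<noteq> 0}. \<Sum>a\<in>{a. f a \<noteq> 0}. \<Sum>b\<in>{b. g b \<noteq> 0}.
      if e + b + a = d \<and> compatible3 e b a then h e * g b * f a else 0)"
    by (rule sum.swap)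
  also have "\<dots> = ((f \<otimes>\<^bsub>R\<^esub> g) \<otimes>\<^bsub>R\<^esub> h) d"
    unfolding mult_mult_eq_sum3[OF assms]
    by (intro sum.cong refl) (simp add: compatible3_commute ac_simps)
  finally show "((f \<otimes>\<^bsub>R\<^esub> g) \<otimes>\<^bsub>R\<^esub> h) d = (f \<otimes>\<^bsub>R\<^esub> (g \<otimes>\<^bsub>R\<^esub> h)) d"
    by simp
qed

lemma add_closed:
  assumes "f \<in> carrier R" "g \<in> carrier R"
  shows "f \<oplus>\<^bsub>R\<^esub> g \<in> carrier R"
proof -
  have "{c. f c + g c \<noteq> 0} \<subseteq> {c. f c \<noteq> 0} \<union> {c. g c \<noteq> 0}"
    by auto
  with assms show ?thesis
    unfolding carrier_R add_R by (meson finite_UnI finite_subset le_sup_iff subset_trans)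
qed

lemma mult_add_distrib:
  assumes "f \<in> carrier R" "g \<in> carrier R" "h \<in> carrier R"
  shows "(f \<oplus>\<^bsub>R\<^esub> g) \<otimes>\<^bsub>R\<^esub> h = f \<otimes>\<^bsub>R\<^esub> h \<oplus>\<^bsub>R\<^esub> g \<otimes>\<^bsub>R\<^esub> h"
proof
  fix c
  define A B where "A = {c. f c \<noteq> 0} \<union> {c. g c \<noteq> 0}" and "B = {c. h c \<noteq> 0}"
  have fin: "finite A" "finite B"
    using assms by (auto simp: carrier_R A_def B_def)
  have "((f \<oplus>\<^bsub>R\<^esub> g) \<otimes>\<^bsub>R\<^esub> h) c = convolution_on A B (\<lambda>c. f c + g c) h c"
    unfolding add_R using fin by (intro mult_eq_convolution_on) (auto simp: A_def B_def)
  moreover have "(f \<otimes>\<^bsub>R\<^esub> h) c = convolution_on A B f h c"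
    using fin by (intro mult_eq_convolution_on) (auto simp: A_def B_def)
  moreover have "(g \<otimes>\<^bsub>R\<^esub> h) c = convolution_on A B g h c"
    using fin by (intro mult_eq_convolution_on) (auto simp: A_def B_def)
  ultimately show "((f \<oplus>\<^bsub>R\<^esub> g) \<otimes>\<^bsub>R\<^esub> h) c = (f \<otimes>\<^bsub>R\<^esub> h \<oplus>\<^bsub>R\<^esub> g \<otimes>\<^bsub>R\<^esub> h) c"
    unfolding add_R convolution_on_def
    by (simp add: sum.distrib[symmetric] distrib_right if_distrib cong: if_cong)
qed

lemma compatible_0: "a \<in> mc_support \<Sigma> M \<Longrightarrow> compatible 0 a"
  unfolding mc_support_def compatible_def using monoid_zero by blast

lemma one_closed: "\<one>\<^bsub>R\<^esub> \<in> carrier R"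
  using nonempty monoid_zero by (auto simp: one_R carrier_R mc_support_def)

lemma one_mult:
  assumes "f \<in> carrier R"
  shows "\<one>\<^bsub>R\<^esub> \<otimes>\<^bsub>R\<^esub> f = f"
proof
  fix c
  define B where "B = {b. f b \<noteq> 0}"
  have B: "finite B" "B \<subseteq> mc_support \<Sigma> M"
    using assms by (auto simp: carrier_R B_def)
  have "(\<one>\<^bsub>R\<^esub> \<otimes>\<^bsub>R\<^esub> f) c = convolution_on {0} B (\<lambda>c. if c = 0 then 1 else 0) f c"
    unfolding one_R using B by (intro mult_eq_convolution_on) (auto simp: B_def)
  also have "\<dots> = (\<Sum>b\<in>B. if b = c \<and> compatible 0 b then f b else 0)"
    by (simp add: convolution_on_def cong: if_cong)
  also have "\<dots> = (\<Sum>b\<in>B. if b = c then f c else 0)"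
    using B by (intro sum.cong refl) (auto simp: compatible_0)
  also have "\<dots> = f c"
    using B by (simp add: B_def)
  finally show "(\<one>\<^bsub>R\<^esub> \<otimes>\<^bsub>R\<^esub> f) c = f c" .
qed

lemma ring_R: "ring R"
proof (rule ringI)
  show "abelian_group R"
  proof (rule abelian_groupI)
    fix f
    assume "f \<in> carrier R"
    then show "\<exists>g\<in>carrier R. g \<oplus>\<^bsub>R\<^esub> f = \<zero>\<^bsub>R\<^esub>"
      by (intro bexI[of _ "\<lambda>c. - f c"]) (auto simp: carrier_R add_R zero_R)
  qed (fact add_closed | auto simp: carrier_R add_R zero_R add.assoc add.commute)+
  show "monoid R"
    by (rule monoidI)
      (auto simp: mult_closed one_closed mult_assoc one_mult mult_commute[of _ "\<one>\<^bsub>R\<^esub>"])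
qed (metis mult_add_distrib mult_commute)+

lemma a_inv_R: "f \<in> carrier R \<Longrightarrow> \<ominus>\<^bsub>R\<^esub> f = (\<lambda>c. - f c)"
  by (rule abelian_group.minus_equality[OF ring.is_abelian_group[OF ring_R]])
    (auto simp: carrier_R add_R zero_R)

definition supported_outside :: "(int ^ 'd) set \<Rightarrow> (int ^ 'd \<Rightarrow> 'k::field) set" where
  "supported_outside S = {f \<in> carrier R. \<forall>a. f a \<noteq> 0 \<longrightarrow> a \<notin> S}"

lemma supported_outside_subset_carrier: "supported_outside S \<subseteq> carrier R"
  by (auto simp: supported_outside_def)

lemma zero_supported_outside: "\<zero>\<^bsub>R\<^esub> \<in> supported_outside S"
  by (simp add: supported_outside_def zero_R carrier_R)

lemma add_supported_outside:
  assumes "f \<in> supported_outside S" "g \<in> supported_outside S"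
  shows "f \<oplus>\<^bsub>R\<^esub> g \<in> supported_outside S"
  using assms add_closed[of f g] unfolding supported_outside_def add_R by (auto, metis add_0)

lemma a_inv_supported_outside:
  assumes "f \<in> supported_outside S"
  shows "\<ominus>\<^bsub>R\<^esub> f \<in> supported_outside S"
  using assms by (auto simp: supported_outside_def carrier_R a_inv_R)

lemma mult_supported_outside:
  assumes C: "C \<in> \<Sigma>" and x: "x \<in> carrier R" and f: "f \<in> supported_outside (M C)"
  shows "x \<otimes>\<^bsub>R\<^esub> f \<in> supported_outside (M C)"
proof -
  have "c \<notin> M C" if "(x \<otimes>\<^bsub>R\<^esub> f) c \<noteq> 0" for c
  proof
    assume "c \<in> M C"
    obtain p q where "f q \<noteq> 0" "p + q = c" "compatible p q"
      using \<open>(x \<otimes>\<^bsub>R\<^esub> f) c \<noteq> 0\<close> by (rule mult_nonzeroD)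
    then have "q \<in> M C"
      using \<open>c \<in> M C\<close> monoid_summands[OF C] unfolding compatible_def by blast
    with \<open>f q \<noteq> 0\<close> f show False
      by (auto simp: supported_outside_def)
  qed
  then show ?thesis
    using mult_closed[OF x] f by (auto simp: supported_outside_def)
qed

lemma ideal_supported_outside:
  assumes "C \<in> \<Sigma>"
  shows "ideal (supported_outside (M C) :: (int ^ 'd \<Rightarrow> 'k::field) set) R"
proof (rule idealI[OF ring_R])
  show "subgroup (supported_outside (M C) :: (int ^ 'd \<Rightarrow> 'k) set) (add_monoid R)"
  proof (rule subgroup.intro)
    fix f g :: "int ^ 'd \<Rightarrow> 'k"
    assume "f \<in> supported_outside (M C)" "g \<in> supported_outside (M C)"
    then show "f \<otimes>\<^bsub>add_monoid R\<^esub> g \<in> supported_outside (M C)"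
      by (simp add: add_supported_outside)
  next
    fix f :: "int ^ 'd \<Rightarrow> 'k"
    assume "f \<in> supported_outside (M C)"
    then show "inv\<^bsub>add_monoid R\<^esub> f \<in> supported_outside (M C)"
      using a_inv_supported_outside unfolding a_inv_def by blast
  qed (simp_all add: supported_outside_subset_carrier zero_supported_outside)
qed (metis mult_supported_outside[OF assms] mult_commute)+

lemma monomial_closed: "a \<in> mc_support \<Sigma> M \<Longrightarrow> monomial a \<in> carrier R"
  by (simp add: carrier_R monomial_def)

lemma const_mult_monomial:
  assumes "a \<in> mc_support \<Sigma> M"
  shows "(\<lambda>c. if c = 0 then k else 0) \<otimes>\<^bsub>R\<^esub> monomial a = (\<lambda>c. if c = a then k else 0)"
proof
  fix c
  have "((\<lambda>c. if c = 0 then k else 0) \<otimes>\<^bsub>R\<^esub> monomial a) c =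
      convolution_on {0} {a} (\<lambda>c. if c = 0 then k else 0) (monomial a) c"
    by (rule mult_eq_convolution_on) (auto simp: monomial_def)
  also have "\<dots> = (if c = a then k else 0)"
    using compatible_0[OF assms] by (auto simp: convolution_on_def monomial_def)
  finally show "((\<lambda>c. if c = 0 then k else 0) \<otimes>\<^bsub>R\<^esub> monomial a) c = (if c = a then k else 0)" .
qed

lemma scaled_monomial_mem_ideal:
  fixes k :: "'k::field"
  assumes I: "ideal I R" and x: "monomial x \<in> I"
  shows "(\<lambda>c. if c = x then k else 0) \<in> I"
proof -
  have "(monomial x :: int ^ 'd \<Rightarrow> 'k) \<in> carrier R"
    using x ideal.Icarr[OF I] by blast
  then have x_supp: "x \<in> mc_support \<Sigma> M"
    by (auto simp: carrier_R monomial_def)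
  then have "(\<lambda>c. if c = 0 then k else 0) \<in> carrier R"
    using monoid_zero by (auto simp: carrier_R mc_support_def)
  then have "(\<lambda>c. if c = 0 then k else 0) \<otimes>\<^bsub>R\<^esub> monomial x \<in> I"
    by (rule ideal.I_l_closed[OF I x])
  then show ?thesis
    by (simp only: const_mult_monomial[OF x_supp])
qed

lemma ideal_mem_if_monomials_mem:
  assumes I: "ideal I R" and f: "f \<in> carrier R" and mono: "\<forall>a. f a \<noteq> 0 \<longrightarrow> monomial a \<in> I"
  shows "f \<in> I"
proof -
  have zero: "\<zero>\<^bsub>R\<^esub> \<in> I" and add: "\<And>g h. g \<in> I \<Longrightarrow> h \<in> I \<Longrightarrow> g \<oplus>\<^bsub>R\<^esub> h \<in> I"
    using ideal.axioms(1)[OF I] by (auto intro: additive_subgroup.zero_closed additive_subgroup.a_closed)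
  have "f \<in> I" if "finite A" "{a. f a \<noteq> 0} \<subseteq> A" "\<forall>a. f a \<noteq> 0 \<longrightarrow> monomial a \<in> I" for A f
    using that
  proof (induction A arbitrary: f rule: finite_induct)
    case empty
    then have "f = \<zero>\<^bsub>R\<^esub>"
      by (auto simp: zero_R)
    with zero show ?case
      by simp
  next
    case (insert x A)
    let ?g = "\<lambda>c. if c = x then f x else 0"
    have "f(x := 0) \<in> I"
      using insert.prems by (intro insert.IH) auto
    moreover have "?g \<in> I"
    proof (cases "f x = 0")
      case True
      then have "?g = \<zero>\<^bsub>R\<^esub>"
        by (auto simp: zero_R)
      with zero show ?thesis
        by simp
    next
      case False
      then show ?thesis
        using insert.prems(2) scaled_monomial_mem_ideal[OF I] by blast
    qed
    ultimately have "f(x := 0) \<oplus>\<^bsub>R\<^esub> ?g \<in> I"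
      by (rule add)
    moreover have "f(x := 0) \<oplus>\<^bsub>R\<^esub> ?g = f"
      by (auto simp: add_R)
    ultimately show ?case
      by simp
  qed
  then show ?thesis
    using f mono by (auto simp: carrier_R)
qed

lemma monomial_supported_outside:
  "a \<in> mc_support \<Sigma> M \<Longrightarrow> a \<notin> S \<Longrightarrow> monomial a \<in> supported_outside S"
  by (simp add: supported_outside_def monomial_closed) (simp add: monomial_def)

lemma tfr_prime_eq_supported_outside:
  assumes C: "C \<in> \<Sigma>"
  shows "tfr_prime \<Sigma> M C = supported_outside (M C)"
proof
  let ?G = "{monomial a | a. a \<in> mc_support \<Sigma> M - M C}"
  have G: "?G \<subseteq> carrier R"
    using monomial_closed by blast
  have "?G \<subseteq> supported_outside (M C)"
    using monomial_supported_outside by blast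
  then show "tfr_prime \<Sigma> M C \<subseteq> supported_outside (M C)"
    unfolding tfr_prime_def
    by (rule ring.genideal_minimal[OF ring_R ideal_supported_outside[OF C]])
  show "supported_outside (M C) \<subseteq> tfr_prime \<Sigma> M C"
  proof
    fix f
    assume f: "f \<in> supported_outside (M C)"
    have "monomial a \<in> ?G" if "f a \<noteq> 0" for a
      using f that by (auto simp: supported_outside_def carrier_R)
    then show "f \<in> tfr_prime \<Sigma> M C"
      unfolding tfr_prime_def using f ring.genideal_self[OF ring_R G]
      by (intro ideal_mem_if_monomials_mem[OF ring.genideal_ideal[OF ring_R G]])
        (auto simp: supported_outside_def)
  qed
qed

lemma supported_outside_antimono: "T \<subseteq> S \<Longrightarrow> supported_outside S \<subseteq> supported_outside T"
  by (auto simp: supported_outside_def)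

lemma supported_outside_set_add:
  "supported_outside S <+>\<^bsub>R\<^esub> supported_outside T = supported_outside (S \<inter> T)"
proof
  show "supported_outside S <+>\<^bsub>R\<^esub> supported_outside T \<subseteq> supported_outside (S \<inter> T)"
    using supported_outside_antimono[of "S \<inter> T" S] supported_outside_antimono[of "S \<inter> T" T]
    by (auto simp: set_add_def' intro!: add_supported_outside)
  show "supported_outside (S \<inter> T) \<subseteq> supported_outside S <+>\<^bsub>R\<^esub> supported_outside T"
  proof
    fix f
    assume f: "f \<in> supported_outside (S \<inter> T)"
    define g h where "g = (\<lambda>c. if c \<in> S then 0 else f c)" and "h = (\<lambda>c. if c \<in> S then f c else 0)"
    have "g \<in> supported_outside S" "h \<in> supported_outside T"
      using f by (auto simp: supported_outside_def carrier_R g_def h_def intro: finite_subset)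
    moreover have "f = g \<oplus>\<^bsub>R\<^esub> h"
      by (auto simp: add_R g_def h_def)
    ultimately show "f \<in> supported_outside S <+>\<^bsub>R\<^esub> supported_outside T"
      by (auto simp: set_add_def')
  qed
qed

lemma supported_outside_INT:
  "I \<noteq> {} \<Longrightarrow> (\<Inter>i\<in>I. supported_outside (S i)) = supported_outside (\<Union>i\<in>I. S i)"
  by (auto simp: supported_outside_def)

lemma ideal_sum_supported_outside:
  "1 \<le> n \<Longrightarrow> ideal_sum R (\<lambda>i. supported_outside (S i)) n = supported_outside (\<Inter>i\<in>{1..n}. S i)"
proof (induction n rule: nat_induct_at_least)
  case (Suc n)
  have "{1..Suc n} = insert (Suc n) {1..n}"
    using Suc.hyps by auto
  then show ?case
    using Suc by (simp add: ideal_sum_Suc supported_outside_set_add Int_commute)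
qed simp

lemma tfr_prime_INT_eq_ideal_sum:
  assumes "1 \<le> n" "C ` {1..n} \<subseteq> \<Sigma>"
  shows "tfr_prime \<Sigma> M (\<Inter>i\<in>{1..n}. C i) = ideal_sum R (\<lambda>i. tfr_prime \<Sigma> M (C i)) n"
proof -
  have "(\<Inter>i\<in>{1..n}. C i) \<in> \<Sigma>" "M (\<Inter>i\<in>{1..n}. C i) = (\<Inter>i\<in>{1..n}. M (C i))"
    using monoid_INT[of "{1..n}" C] assms by auto
  then have "tfr_prime \<Sigma> M (\<Inter>i\<in>{1..n}. C i) = supported_outside (\<Inter>i\<in>{1..n}. M (C i))"
    by (simp add: tfr_prime_eq_supported_outside)
  also have "\<dots> = ideal_sum R (\<lambda>i. supported_outside (M (C i))) n"
    using assms(1) by (rule ideal_sum_supported_outside[symmetric])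
  also have "\<dots> = ideal_sum R (\<lambda>i. tfr_prime \<Sigma> M (C i)) n"
    by (rule ideal_sum_cong, rule tfr_prime_eq_supported_outside[symmetric]) (use assms(2) in auto)
  finally show ?thesis .
qed

lemma tfr_prime_set_add_INT:
  assumes D: "D \<in> \<Sigma>" and "I \<noteq> {}" "C ` I \<subseteq> \<Sigma>"
  shows "tfr_prime \<Sigma> M D <+>\<^bsub>R\<^esub> (\<Inter>i\<in>I. tfr_prime \<Sigma> M (C i))
    = (\<Inter>i\<in>I. tfr_prime \<Sigma> M D <+>\<^bsub>R\<^esub> tfr_prime \<Sigma> M (C i))"
proof -
  have prime_C: "tfr_prime \<Sigma> M (C i) = supported_outside (M (C i))" if "i \<in> I" for i
    using assms(3) that by (intro tfr_prime_eq_supported_outside) blast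
  have "tfr_prime \<Sigma> M D <+>\<^bsub>R\<^esub> (\<Inter>i\<in>I. tfr_prime \<Sigma> M (C i))
      = supported_outside (M D) <+>\<^bsub>R\<^esub> (\<Inter>i\<in>I. supported_outside (M (C i)))"
    by (simp add: tfr_prime_eq_supported_outside[OF D] prime_C)
  also have "\<dots> = supported_outside (M D \<inter> (\<Union>i\<in>I. M (C i)))"
    unfolding supported_outside_INT[OF assms(2)] supported_outside_set_add ..
  also have "\<dots> = (\<Inter>i\<in>I. supported_outside (M D) <+>\<^bsub>R\<^esub> supported_outside (M (C i)))"
    unfolding supported_outside_INT[OF assms(2)] supported_outside_set_add Int_UN_distrib ..
  also have "\<dots> = (\<Inter>i\<in>I. tfr_prime \<Sigma> M D <+>\<^bsub>R\<^esub> tfr_prime \<Sigma> M (C i))"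
    by (simp add: tfr_prime_eq_supported_outside[OF D] prime_C)
  finally show ?thesis .
qed

end

theorem lemma2p3:
  fixes \<Sigma> :: "(real ^ 'd) set set"
    and M :: "(real ^ 'd) set \<Rightarrow> (int ^ 'd) set"
    and C :: "nat \<Rightarrow> (real ^ 'd) set"
    and D :: "(real ^ 'd) set"
    and j :: nat
  assumes "rational_pointed_fan \<Sigma>"
    and "monoidal_complex \<Sigma> M"
    and "j \<ge> 1"
    and "\<forall>i\<in>{1..j}. C i \<in> \<Sigma>"
    and "D \<in> \<Sigma>"
  shows "(tfr_prime \<Sigma> M (\<Inter>i\<in>{1..j}. C i) :: (int ^ 'd \<Rightarrow> 'k::field) set)
           = ideal_sum (toric_face_ring \<Sigma> M) (\<lambda>i. tfr_prime \<Sigma> M (C i)) j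
       \<and> (\<forall>t. 1 \<le> t \<and> t \<le> j \<longrightarrow>
            (tfr_prime \<Sigma> M D <+>\<^bsub>(toric_face_ring \<Sigma> M :: (int ^ 'd \<Rightarrow> 'k) ring)\<^esub>
               (\<Inter>i\<in>{1..t}. tfr_prime \<Sigma> M (C i)))
            = (\<Inter>i\<in>{1..t}. tfr_prime \<Sigma> M D <+>\<^bsub>toric_face_ring \<Sigma> M\<^esub> tfr_prime \<Sigma> M (C i)))"
proof -
  interpret fan_monoidal_complex \<Sigma> M
    using assms(1,2,5) by unfold_locales auto
  have cones: "C ` {1..t} \<subseteq> \<Sigma>" if "t \<le> j" for t
    using assms(4) that by auto
  have "{1..t} \<noteq> {}" if "1 \<le> t" for t :: nat
    using that by simp
  then show ?thesis
    using tfr_prime_INT_eq_ideal_sum[OF assms(3) cones[OF order.refl]]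
      tfr_prime_set_add_INT[OF assms(5) _ cones] by blast
qed

end
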